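(* Let $N\ge 8$ and let $\alpha=1/4$, $a=3/2$, $\hat a=a/2=3/4$, $\alpha_1=2$, $a_1=-5/2$, $b_1=2$, $c_1=1/2$. Define the $N\times N$ matrices $A$ and $B$ by the following rows (all unspecified entries are zero): - row $1$: $A_{11}=1$, $A_{12}=\alpha_1$; $B_{11}=a_1$, $B_{12}=b_1$, $B_{13}=c_1$; - row $N$: $A_{NN}=1$, $A_{N,N-1}=\alpha_1$; $B_{NN}=-a_1$, $B_{N,N-1}=-b_1$, $B_{N,N-2}=-c_1$; - rows $j=2,\ldots,N-1$: $A_{j,j-1}=A_{j,j+1}=\alpha$, $A_{jj}=1$; $B_{j,j-1}=-\hat a$, $B_{j,j+1}=\hat a$. (So $A\mathbf f'=B\mathbf f$ is the fourth-order Padé scheme $\alpha f'_{j-1}+f'_j+\alpha f'_{j+1}=\tfrac a2(f_{j+1}-f_{j-1})$ at interior points, closed by the third-order one-sided schemes $f'_1+\alpha_1f'_2=a_1f_1+b_1f_2+c_1f_3$ and $f'_N+\alpha_1f'_{N-1}=-(a_1f_N+b_1f_{N-1}+c_1f_{N-2})$, with unit grid spacing in the index variable.) Define $\widehat{\mathbf w}\in\mathbb R^N$ by $\widehat w_1=\widehat w_N=3/8$, $\widehat w_2=\widehat w_{N-1}=7/6$, $\widehat w_3=\widehat w_{N-2}=23/24$, and $\widehat w_j=1$ for $4\le j\le N-3$. Then: (i) the vector $\mathbf w$ with $w_1=w_N=3/8$, $w_2=w_{N-1}=3/4$, and $w_j=1$ for $3\le j\le N-2$ satisfies $\mathbf w^T\mathbf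 b_i=0$ for all $2\le i\le N-1$ (where $\mathbf b_i$ is the $i$-th column of $B$), $\mathbf w^T\mathbf b_1=-3/2$, $\mathbf w^T\mathbf b_N=3/2$, and $\widehat{\mathbf w}^T=-\mathbf w^TA/(\mathbf w^T\mathbf b_1)$; (ii) consequently, for any positive $h_1,\ldots,h_N$ and any functions $u(t),f(t)\in\mathbb R^N$ such that $\mathbf U=(h_1u_1,\ldots,h_Nu_N)^T$ satisfies $A\,d\mathbf U/dt+Bf=0$, one has $$\frac{d}{dt}\sum_{j=1}^N\widehat w_j\,h_j\,u_j=f_1-f_N .$$
   Context: Here $h_i^{-1}=(d\xi/dx)_i$ is the grid metric factor for a mapped grid $x(\xi)$ with $\xi_i=i$, and the semi-discrete system $A\,d\mathbf U/dt+Bf=0$ is the Padé spatial discretization of $\partial_t u+\partial_x f=0$. The identity in (ii) is a discrete analogue of $\frac{d}{dt}\int_0^L u\,dx=f(0)-f(L)$. *)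

theory Defs
  imports Complex_Main
begin

text \<open>Matrices and vectors are 1-indexed functions on nat; entries with an index
outside 1..N are zero.  Parameters of the Pade scheme.\<close>

definition pa_alpha :: real where "pa_alpha = 1/4"
definition pa_a :: real where "pa_a = 3/2"
definition pa_ahat :: real where "pa_ahat = pa_a / 2"
definition pa_alpha1 :: real where "pa_alpha1 = 2"
definition pa_a1 :: real where "pa_a1 = -5/2"
definition pa_b1 :: real where "pa_b1 = 2"
definition pa_c1 :: real where "pa_c1 = 1/2"

definition padeA :: "nat \<Rightarrow> nat \<Rightarrow> nat \<Rightarrow> real" where
  "padeA N i j =
    (if i = 1 then (if j = 1 then 1 else if j = 2 then pa_alpha1 else 0)
     else if i = N then (if j = N then 1 else if j = N - 1 then pa_alpha1 else 0)
     else if 2 \<le> i \<and> i \<le> N - 1 then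
       (if j = i then 1 else if j = i - 1 \<or> j = i + 1 then pa_alpha else 0)
     else 0)"

definition padeB :: "nat \<Rightarrow> nat \<Rightarrow> nat \<Rightarrow> real" where
  "padeB N i j =
    (if i = 1 then (if j = 1 then pa_a1 else if j = 2 then pa_b1 else if j = 3 then pa_c1 else 0)
     else if i = N then (if j = N then - pa_a1 else if j = N - 1 then - pa_b1
                         else if j = N - 2 then - pa_c1 else 0)
     else if 2 \<le> i \<and> i \<le> N - 1 then
       (if j = i - 1 then - pa_ahat else if j = i + 1 then pa_ahat else 0)
     else 0)"

definition padeW :: "nat \<Rightarrow> nat \<Rightarrow> real" where
  "padeW N j =
    (if j = 1 \<or> j = N then 3/8
     else if j = 2 \<or> j = N - 1 then 3/4
     else if 3 \<le> j \<and> j \<le> N - 2 then 1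
     else 0)"

definition padeWhat :: "nat \<Rightarrow> nat \<Rightarrow> real" where
  "padeWhat N j =
    (if j = 1 \<or> j = N then 3/8
     else if j = 2 \<or> j = N - 1 then 7/6
     else if j = 3 \<or> j = N - 2 then 23/24
     else if 4 \<le> j \<and> j \<le> N - 3 then 1
     else 0)"

end

theory Submission imports Defs begin

text \<open>If \<open>w\<^sup>T B\<close> vanishes except in its first and last entries, then left-multiplying
\<open>A dU/dt + B f = 0\<close> by \<open>w\<^sup>T\<close> leaves only the boundary fluxes \<open>f\<^sub>1, f\<^sub>N\<close>; normalising
\<open>w\<^sup>T A\<close> by \<open>w\<^sup>T b\<^sub>1\<close> turns this into the discrete conservation law.\<close>

definition vec_mat :: "nat \<Rightarrow> (nat \<Rightarrow> real) \<Rightarrow> (nat \<Rightarrow> nat \<Rightarrow> real) \<Rightarrow> nat \<Rightarrow> real" where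
  "vec_mat N w M j = (\<Sum>k=1..N. w k * M k j)"

lemma sum_atLeastAtMost_split_ends:
  fixes g :: "nat \<Rightarrow> 'a::comm_monoid_add"
  assumes "N \<ge> 2"
  shows "(\<Sum>k=1..N. g k) = g 1 + g N + (\<Sum>k=2..N-1. g k)"
proof -
  have "{1..N} = insert 1 (insert N {2..N-1})" using assms by auto
  then show ?thesis using assms by (simp add: add.assoc)
qed

lemma sum_vec_mat_mult:
  "(\<Sum>j=1..N. vec_mat N w M j * x j) = (\<Sum>k=1..N. w k * (\<Sum>j=1..N. M k j * x j))"
proof -
  have "(\<Sum>j=1..N. vec_mat N w M j * x j) = (\<Sum>j=1..N. \<Sum>k=1..N. w k * (M k j * x j))"
    unfolding vec_mat_def by (simp add: sum_distrib_right mult.assoc)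
  also have "\<dots> = (\<Sum>k=1..N. \<Sum>j=1..N. w k * (M k j * x j))"
    by (rule sum.swap)
  finally show ?thesis by (simp add: sum_distrib_left)
qed

lemma vec_mat_boundary_flux:
  assumes "N \<ge> 2"
    and interior: "\<forall>i\<in>{2..N-1}. vec_mat N w B i = 0"
    and scheme: "\<forall>i\<in>{1..N}. (\<Sum>j=1..N. A i j * v j) + (\<Sum>j=1..N. B i j * g j) = 0"
  shows "(\<Sum>j=1..N. vec_mat N w A j * v j) = - (vec_mat N w B 1 * g 1 + vec_mat N w B N * g N)"
proof -
  have rows: "(\<Sum>j=1..N. A k j * v j) = - (\<Sum>j=1..N. B k j * g j)" if "k \<in> {1..N}" for k
    using scheme that by (simp add: eq_neg_iff_add_eq_0)
  have "(\<Sum>j=1..N. vec_mat N w A j * v j) = (\<Sum>k=1..N. w k * - (\<Sum>j=1..N. B k j * g j))"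
    unfolding sum_vec_mat_mult using rows by simp
  also have "\<dots> = - (\<Sum>j=1..N. vec_mat N w B j * g j)"
    unfolding sum_vec_mat_mult by (simp add: sum_negf)
  also have "(\<Sum>j=1..N. vec_mat N w B j * g j) = vec_mat N w B 1 * g 1 + vec_mat N w B N * g N"
    unfolding sum_atLeastAtMost_split_ends[OF \<open>N \<ge> 2\<close>] using interior by simp
  finally show ?thesis .
qed

text \<open>The grid metrics \<open>h\<^sub>j\<close> enter only through \<open>U\<^sub>j = h\<^sub>j u\<^sub>j\<close>.\<close>

lemma discrete_conservation:
  assumes "N \<ge> 2"
    and interior: "\<forall>i\<in>{2..N-1}. vec_mat N w B i = 0"
    and ends: "vec_mat N w B N = - vec_mat N w B 1" "vec_mat N w B 1 \<noteq> 0"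
    and what: "\<forall>j\<in>{1..N}. what j = - vec_mat N w A j / vec_mat N w B 1"
    and deriv: "\<forall>j\<in>{1..N}. ((\<lambda>s. u s j) has_real_derivative du j) (at t)"
    and scheme: "\<forall>i\<in>{1..N}. (\<Sum>j=1..N. A i j * (h j * du j)) + (\<Sum>j=1..N. B i j * f j) = 0"
  shows "((\<lambda>s. \<Sum>j=1..N. what j * h j * u s j) has_real_derivative (f 1 - f N)) (at t)"
proof -
  have "((\<lambda>s. \<Sum>j=1..N. what j * h j * u s j) has_real_derivative
         (\<Sum>j=1..N. what j * h j * du j)) (at t)"
    using deriv by (intro DERIV_sum) (auto intro!: DERIV_cmult)
  moreover have "(\<Sum>j=1..N. what j * h j * du j)
      = - (\<Sum>j=1..N. vec_mat N w A j * (h j * du j)) / vec_mat N w B 1"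
    using what by (simp add: sum_divide_distrib flip: sum_negf) (intro sum.cong; simp)
  moreover have "\<dots> = f 1 - f N"
    using vec_mat_boundary_flux[OF \<open>N \<ge> 2\<close> interior scheme] ends
    by (simp add: field_simps)
  ultimately show ?thesis by simp
qed

lemma padeB_interior_row:
  assumes "k \<in> {2..N-1}"
  shows "padeB N k i = (if k = i + 1 then - pa_ahat else 0) + (if k = i - 1 then pa_ahat else 0)"
proof -
  have "k \<noteq> 1" "k \<noteq> N" "2 \<le> k" "k \<le> N - 1" using assms by auto
  then have "padeB N k i = (if i = k - 1 then - pa_ahat else if i = k + 1 then pa_ahat else 0)"
    by (simp add: padeB_def)
  moreover have "k = i + 1 \<longleftrightarrow> i = k - 1" "k = i - 1 \<longleftrightarrow> i = k + 1" "k - 1 \<noteq> k + 1"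
    using \<open>2 \<le> k\<close> by auto
  ultimately show ?thesis by simp
qed

lemma padeA_interior_row:
  assumes "k \<in> {2..N-1}"
  shows "padeA N k j =
    (if k = j then 1 else 0) + (if k = j + 1 then pa_alpha else 0) + (if k = j - 1 then pa_alpha else 0)"
proof -
  have "k \<noteq> 1" "k \<noteq> N" "2 \<le> k" "k \<le> N - 1" using assms by auto
  then have "padeA N k j = (if j = k then 1 else if j = k - 1 \<or> j = k + 1 then pa_alpha else 0)"
    by (simp add: padeA_def)
  moreover have "k = j + 1 \<longleftrightarrow> j = k - 1" "k = j - 1 \<longleftrightarrow> j = k + 1"
    using \<open>2 \<le> k\<close> by auto
  ultimately show ?thesis by auto
qed

lemma vec_mat_padeB:
  assumes "N \<ge> 2"
  shows "vec_mat N w (padeB N) i = w 1 * padeB N 1 i + w N * padeB N N i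
    + (if i + 1 \<in> {2..N-1} then - pa_ahat * w (i + 1) else 0)
    + (if i - 1 \<in> {2..N-1} then pa_ahat * w (i - 1) else 0)"
proof -
  have "(\<Sum>k=2..N-1. w k * padeB N k i)
      = (\<Sum>k=2..N-1. (if k = i + 1 then - pa_ahat * w k else 0) + (if k = i - 1 then pa_ahat * w k else 0))"
    by (intro sum.cong) (auto simp: padeB_interior_row)
  then show ?thesis
    unfolding vec_mat_def sum_atLeastAtMost_split_ends[OF assms]
    by (simp add: sum.distrib add.assoc)
qed

lemma vec_mat_padeA:
  assumes "N \<ge> 2"
  shows "vec_mat N w (padeA N) j = w 1 * padeA N 1 j + w N * padeA N N j
    + (if j \<in> {2..N-1} then w j else 0)
    + (if j + 1 \<in> {2..N-1} then pa_alpha * w (j + 1) else 0)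
    + (if j - 1 \<in> {2..N-1} then pa_alpha * w (j - 1) else 0)"
proof -
  have "(\<Sum>k=2..N-1. w k * padeA N k j)
      = (\<Sum>k=2..N-1. (if k = j then w k else 0) + (if k = j + 1 then pa_alpha * w k else 0)
                    + (if k = j - 1 then pa_alpha * w k else 0))"
    by (intro sum.cong) (auto simp: padeA_interior_row)
  then show ?thesis
    unfolding vec_mat_def sum_atLeastAtMost_split_ends[OF assms]
    by (simp add: sum.distrib add.assoc)
qed

lemmas pade_defs = padeA_def padeB_def padeW_def padeWhat_def pa_alpha_def pa_a_def
  pa_ahat_def pa_alpha1_def pa_a1_def pa_b1_def pa_c1_def

text \<open>Writing \<open>N = M + 8\<close> lets the simplifier decide every comparison between the
boundary indices \<open>1, 2, 3, N-2, N-1, N\<close>.\<close>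

lemma padeW_padeB_interior_column:
  assumes "N \<ge> 8" "i \<in> {2..N-1}"
  shows "vec_mat N (padeW N) (padeB N) i = 0"
proof -
  obtain M where M: "N = M + 8" using \<open>N \<ge> 8\<close> le_Suc_ex by (metis add.commute)
  consider "i = 2" | "i = 3" | "4 \<le> i \<and> i \<le> N - 3" | "i = M + 6" | "i = M + 7"
    using assms M by fastforce
  then show ?thesis
    by cases (auto simp: vec_mat_padeB M pade_defs)
qed

lemma padeW_padeB_end_columns:
  assumes "N \<ge> 8"
  shows "vec_mat N (padeW N) (padeB N) 1 = -3/2" "vec_mat N (padeW N) (padeB N) N = 3/2"
proof -
  obtain M where M: "N = M + 8" using \<open>N \<ge> 8\<close> le_Suc_ex by (metis add.commute)
  show "vec_mat N (padeW N) (padeB N) 1 = -3/2" "vec_mat N (padeW N) (padeB N) N = 3/2"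
    by (simp_all add: vec_mat_padeB M pade_defs)
qed

lemma padeWhat_eq_padeW_padeA:
  assumes "N \<ge> 8" "j \<in> {1..N}"
  shows "padeWhat N j = 2/3 * vec_mat N (padeW N) (padeA N) j"
proof -
  obtain M where M: "N = M + 8" using \<open>N \<ge> 8\<close> le_Suc_ex by (metis add.commute)
  consider "j = 1" | "j = 2" | "j = 3" | "4 \<le> j \<and> j \<le> N - 3" | "j = M + 6" | "j = M + 7" | "j = M + 8"
    using assms M by fastforce
  then show ?thesis
  proof cases
    case 4
    then have "padeA N 1 j = 0" "padeA N N j = 0" "padeWhat N j = 1"
      "padeW N (j - 1) = 1" "padeW N j = 1" "padeW N (j + 1) = 1"
      "j - 1 \<in> {2..N-1}" "j \<in> {2..N-1}" "j + 1 \<in> {2..N-1}"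
      unfolding pade_defs by auto
    then show ?thesis by (simp add: vec_mat_padeA M pa_alpha_def)
  qed (simp_all add: vec_mat_padeA M pade_defs)
qed

theorem mainTheorem2:
  fixes N :: nat
  assumes N8: "N \<ge> 8"
  shows
   "(\<forall>i\<in>{2..N-1}. (\<Sum>k=1..N. padeW N k * padeB N k i) = 0)
    \<and> (\<Sum>k=1..N. padeW N k * padeB N k 1) = -3/2
    \<and> (\<Sum>k=1..N. padeW N k * padeB N k N) = 3/2
    \<and> (\<forall>j\<in>{1..N}. padeWhat N j =
          - (\<Sum>k=1..N. padeW N k * padeA N k j) / (\<Sum>k=1..N. padeW N k * padeB N k 1))
    \<and> (\<forall>(h :: nat \<Rightarrow> real) (u :: real \<Rightarrow> nat \<Rightarrow> real) (du :: real \<Rightarrow> nat \<Rightarrow> real)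
          (f :: real \<Rightarrow> nat \<Rightarrow> real).
         (\<forall>j\<in>{1..N}. h j > 0)
         \<longrightarrow> (\<forall>t. \<forall>j\<in>{1..N}. ((\<lambda>s. u s j) has_real_derivative du t j) (at t))
         \<longrightarrow> (\<forall>t. \<forall>i\<in>{1..N}.
                (\<Sum>j=1..N. padeA N i j * (h j * du t j)) + (\<Sum>j=1..N. padeB N i j * f t j) = 0)
         \<longrightarrow> (\<forall>t. ((\<lambda>s. \<Sum>j=1..N. padeWhat N j * h j * u s j)
                     has_real_derivative (f t 1 - f t N)) (at t)))"
proof -
  have interior: "\<forall>i\<in>{2..N-1}. vec_mat N (padeW N) (padeB N) i = 0"
    using padeW_padeB_interior_column[OF N8] by blast
  note ends = padeW_padeB_end_columns[OF N8]
  have what: "\<forall>j\<in>{1..N}. padeWhat N j =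
      - vec_mat N (padeW N) (padeA N) j / vec_mat N (padeW N) (padeB N) 1"
    using padeWhat_eq_padeW_padeA[OF N8] ends by simp
  have "N \<ge> 2" using N8 by simp
  have opposite_ends: "vec_mat N (padeW N) (padeB N) N = - vec_mat N (padeW N) (padeB N) 1"
    and first_nonzero: "vec_mat N (padeW N) (padeB N) 1 \<noteq> 0"
    using ends by simp_all
  have conservation: "((\<lambda>s. \<Sum>j=1..N. padeWhat N j * h j * u s j) has_real_derivative (f t 1 - f t N)) (at t)"
    if "\<forall>t. \<forall>j\<in>{1..N}. ((\<lambda>s. u s j) has_real_derivative du t j) (at t)"
      and "\<forall>t. \<forall>i\<in>{1..N}.
             (\<Sum>j=1..N. padeA N i j * (h j * du t j)) + (\<Sum>j=1..N. padeB N i j * f t j) = 0"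
    for h u du f t
    using that by (intro discrete_conservation[OF \<open>N \<ge> 2\<close> interior opposite_ends first_nonzero what]) auto
  show ?thesis
    using interior ends what conservation unfolding vec_mat_def by blast
qed

end
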